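(* Let $0<\alpha<1$ and let $\bar M^\alpha(t)=\bar M(D_\alpha(t))$ be the multivariate generalized space fractional counting process (MGSFCP). Its state probabilities $p^\alpha(\bar n,t)=\Pr\{\bar M^\alpha(t)=\bar n\}$, $\bar n\in\mathbb{N}_0^q$, satisfy $$\frac{\mathrm{d}}{\mathrm{d}t}p^\alpha(\bar n,t)=-\sum_{\bar m\in\mathbb{N}_0^q}\ \sum_{\substack{\Omega(k_i,m_i)\\ i=1,\dots,q}}\frac{\lambda^\alpha\Gamma(\alpha+1)\,p^\alpha(\bar n-\bar m,t)}{\Gamma\big(\alpha-\sum_{i=1}^q\sum_{j=1}^{k_i}x_{ij}+1\big)}\prod_{i=1}^q\prod_{j=1}^{k_i}\frac{(-\lambda_{ij}/\lambda)^{x_{ij}}}{x_{ij}!}$$ with initial condition $p^\alpha(\bar n,0)=\mathbb{I}_{\{\bar n=\bar 0\}}$.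
   Context: Fix $q\ge1$, integers $k_1,\dots,k_q\ge1$, $\lambda_{ij}>0$ ($1\le i\le q$, $1\le j\le k_i$), $\lambda=\sum_{i,j}\lambda_{ij}$. The MGCP $\bar M(t)=(M_1(t),\dots,M_q(t))$ is the $\mathbb{N}_0^q$-valued process with $\bar M(0)=\bar0$, independent stationary increments and transition probabilities $\Pr\{\bar M(t+h)=\bar n+\bar j\mid\bar M(t)=\bar n\}=\lambda_{ij}h+o(h)$ if $\bar j$ has $i$th entry $j\in\{1,\dots,k_i\}$ and other entries $0$, $1-\lambda h+o(h)$ if $\bar j=\bar0$, $o(h)$ otherwise (equivalently, independent components with joint pgf $\exp(-t\sum_{i,j}\lambda_{ij}(1-u_i^j))$). $\{D_\alpha(t)\}$ is an $\alpha$-stable subordinator ($\mathbb{E}e^{-sD_\alpha(t)}=e^{-ts^\alpha}$) independent of $\bar M$. $\Omega(k_i,m_i)=\{(x_{i1},\dots,x_{ik_i})\in\mathbb{N}_0^{k_i}:\sum_{j=1}^{k_i}jx_{ij}=m_i\}$, and the sum over "$\Omega(k_i,m_i)$, $i=1,\dots,q$" runs over all families $(x_{ij})$ with $(x_{i1},\dots,x_{ik_i})\in\Omega(k_i,m_i)$ for every $i$. Conventions: $p^\alpha(\bar n-\bar m,t)=0$ if some component of $\bar n-\bar m$ is negative; $1/\Gamma(z)=0$ for $z\in\{0,-1,-2,\dots\}$. *)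

theory Defs
  imports "HOL-Analysis.Analysis" "HOL-Probability.Probability"
begin

definition poisson0 :: "real \<Rightarrow> nat pmf" where
  "poisson0 r = (if 0 < r then poisson_pmf r else return_pmf 0)"

text \<open>Law at time s of the generalized counting process with k jumps of sizes 1..K,
  rates l 1, ..., l K:  M(s) = sum_j j * N_j(s), N_j independent Poisson(l j * s).\<close>
definition GCP_pmf :: "nat \<Rightarrow> (nat \<Rightarrow> real) \<Rightarrow> real \<Rightarrow> nat pmf" where
  "GCP_pmf K l s = map_pmf (\<lambda>N. \<Sum>j\<in>{1..K}. j * N j)
                     (Pi_pmf {1..K} 0 (\<lambda>j. poisson0 (l j * s)))"

text \<open>Law at time s of the MGCP (independent components i = 1..q);
  vectors in N_0^q are functions nat => nat vanishing outside {1..q}.\<close>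
definition MGCP_pmf :: "nat \<Rightarrow> (nat \<Rightarrow> nat) \<Rightarrow> (nat \<Rightarrow> nat \<Rightarrow> real) \<Rightarrow> real \<Rightarrow> (nat \<Rightarrow> nat) pmf" where
  "MGCP_pmf q k lam s = Pi_pmf {1..q} 0 (\<lambda>i. GCP_pmf (k i) (lam i) s)"

text \<open>State probabilities of the MGSFCP M(D_alpha(t)), where mu t is the law of D_alpha(t)
  (independent of M): p^alpha(n,t) = E[ Pr{M(s) = n} at s = D_alpha(t) ].\<close>
definition MGSFCP_prob ::
  "nat \<Rightarrow> (nat \<Rightarrow> nat) \<Rightarrow> (nat \<Rightarrow> nat \<Rightarrow> real) \<Rightarrow> (real \<Rightarrow> real measure) \<Rightarrow> (nat \<Rightarrow> nat) \<Rightarrow> real \<Rightarrow> real" where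
  "MGSFCP_prob q k lam mu n t = (\<integral>s. pmf (MGCP_pmf q k lam s) n \<partial>(mu t))"

definition MGSFCP_prob_diff ::
  "nat \<Rightarrow> (nat \<Rightarrow> nat) \<Rightarrow> (nat \<Rightarrow> nat \<Rightarrow> real) \<Rightarrow> (real \<Rightarrow> real measure) \<Rightarrow> (nat \<Rightarrow> nat) \<Rightarrow> (nat \<Rightarrow> nat) \<Rightarrow> real \<Rightarrow> real" where
  "MGSFCP_prob_diff q k lam mu n m t =
     (if \<exists>i\<in>{1..q}. n i < m i then 0 else MGSFCP_prob q k lam mu (\<lambda>i. n i - m i) t)"

definition Omega :: "nat \<Rightarrow> nat \<Rightarrow> (nat \<Rightarrow> nat) set" where
  "Omega K m = {x \<in> PiE {1..K} (\<lambda>_. UNIV). (\<Sum>j\<in>{1..K}. j * x j) = m}"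

definition NQ :: "nat \<Rightarrow> (nat \<Rightarrow> nat) set" where
  "NQ q = {m. \<forall>i. i \<notin> {1..q} \<longrightarrow> m i = 0}"

end

(* Conditioning on D = D_alpha(t) writes p^alpha(n, t) as a finite combination, over the jump
   configurations x of the MGCP ending in n, of the moments E[D^r exp(-Lambda D)], where r is the
   total number of jumps in x. As E exp(-u D) = exp(-t u^alpha), these moments are
   (-1)^r (d/du)^r exp(-t u^alpha) at u = Lambda, which we compute in closed form.
   Differentiating in t brings down -u^alpha, and the Leibniz rule with
   (d/du)^b u^alpha = (alpha)_b u^(alpha - b) expresses the t-derivative of the r-th moment
   through the lower ones. A multivariate Vandermonde identity then splits every jump
   configuration into the jumps carrying the derivatives and the remaining ones, which is the
   convolution of the statement, Gamma(alpha + 1) / Gamma(alpha - b + 1) = (alpha)_b being a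
   falling factorial. *)
theory Submission
  imports Defs "HOL-Computational_Algebra.Formal_Power_Series"
begin

definition ffact :: "'a::comm_ring_1 \<Rightarrow> nat \<Rightarrow> 'a" where
  "ffact x r = (\<Prod>i = 0..<r. x - of_nat i)"

lemma ffact_0 [simp]: "ffact x 0 = 1"
  by (simp add: ffact_def)

lemma ffact_Suc: "ffact x (Suc r) = ffact x r * (x - of_nat r)"
  by (simp add: ffact_def)

lemma ffact_zero: "ffact 0 r = (if r = 0 then 1 else 0)"
  by (induction r) (auto simp: ffact_Suc)

lemma ffact_eq_fact_mult_gbinomial: "ffact (x :: 'a :: field_char_0) r = fact r * (x gchoose r)"
  by (simp add: ffact_def gbinomial_mult_fact)

lemma ffact_add:
  fixes x y :: "'a :: field_char_0"
  shows "ffact (x + y) r = (\<Sum>b\<le>r. of_nat (r choose b) * ffact x b * ffact y (r - b))"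
proof -
  have "ffact (x + y) r = fact r * (\<Sum>b\<le>r. (x gchoose b) * (y gchoose (r - b)))"
    using gbinomial_Vandermonde[of x y r] by (simp add: ffact_eq_fact_mult_gbinomial atLeast0AtMost)
  also have "\<dots> = (\<Sum>b\<le>r. of_nat (r choose b) * ffact x b * ffact y (r - b))"
    unfolding sum_distrib_left
    by (intro sum.cong refl) (simp add: ffact_eq_fact_mult_gbinomial binomial_fact field_simps)
  finally show ?thesis .
qed

lemma Gamma_mult_rGamma_eq_ffact:
  fixes a :: real
  assumes "-1 < a"
  shows "Gamma (a + 1) * rGamma (a - of_nat b + 1) = ffact a b"
proof (induction b)
  case 0
  have "Gamma (a + 1) > 0" using assms by (intro Gamma_real_pos) simp
  then show ?case by (simp add: rGamma_inverse_Gamma)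
next
  case (Suc b)
  have "rGamma (a - of_nat (Suc b) + 1) = (a - of_nat b) * rGamma (a - of_nat b + 1)"
    using rGamma_plus1[of "a - of_nat b"] by simp
  then show ?case using Suc by (simp add: ffact_Suc)
qed

lemma alternating_choose_sum_Suc:
  fixes f :: "nat \<Rightarrow> 'a :: comm_ring_1"
  shows "(\<Sum>K\<le>Suc k. (-1) ^ K * of_nat (Suc k choose K) * f K)
       = (\<Sum>K\<le>k. (-1) ^ K * of_nat (k choose K) * (f K - f (Suc K)))"
proof -
  let ?g = "\<lambda>n K. (-1) ^ K * of_nat (n choose K) * f K"
  have "(\<Sum>K\<le>Suc k. ?g (Suc k) K) = f 0 + (\<Sum>K\<le>k. ?g (Suc k) (Suc K))"
    by (subst sum.atMost_Suc_shift) simp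
  also have "\<dots> = (f 0 + (\<Sum>K\<le>k. ?g k (Suc K))) - (\<Sum>K\<le>k. (-1) ^ K * of_nat (k choose K) * f (Suc K))"
    by (simp add: sum_subtractf[symmetric] sum.distrib[symmetric] algebra_simps)
  also have "f 0 + (\<Sum>K\<le>k. ?g k (Suc K)) = (\<Sum>K\<le>k. ?g k K)"
    using sum.atMost_Suc_shift[of "?g k" k] by (simp add: binomial_eq_0)
  finally show ?thesis
    by (simp add: sum_subtractf[symmetric] algebra_simps)
qed

lemma of_nat_choose_Suc_mult:
  "of_nat (Suc k choose K) * (of_nat (Suc k) - of_nat K) = (of_nat (Suc k) * of_nat (k choose K) :: 'a :: comm_ring_1)"
proof (cases "K \<le> Suc k")
  case True
  then have "(Suc k - K) * (Suc k choose K) = Suc k * (k choose K)"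
    using binomial_absorb_comp[of "Suc k" K] by simp
  then show ?thesis using True by (metis mult.commute of_nat_diff of_nat_mult)
next
  case False
  then show ?thesis by (simp add: binomial_eq_0)
qed

section \<open>Derivatives of the Laplace transform of a stable law\<close>

(* The coefficient of t^k u^(k a - r) in exp(t u^a) (d/du)^r exp(-t u^a): differentiating
   exp(-t u^a) = sum_K (-t)^K u^(K a) / K! termwise and multiplying by the series of exp(t u^a)
   gives this finite difference. *)
definition stable_coeff :: "real \<Rightarrow> nat \<Rightarrow> nat \<Rightarrow> real" where
  "stable_coeff a r k =
     (\<Sum>K\<le>k. (-1) ^ K * of_nat (k choose K) * ffact (of_nat K * a) r) / fact k"

lemma stable_coeff_0_left: "stable_coeff a 0 k = (if k = 0 then 1 else 0)"
proof -
  have "(\<Sum>K\<le>k. (-1::real) ^ K * of_nat (k choose K)) = (if k = 0 then 1 else 0)"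
    using choose_alternating_sum[of k, where 'a=real] by (cases "k = 0") (auto simp: mult.commute)
  then show ?thesis by (simp add: stable_coeff_def)
qed

lemma stable_coeff_0_right: "stable_coeff a r 0 = (if r = 0 then 1 else 0)"
  by (simp add: stable_coeff_def ffact_zero)

lemma fact_mult_stable_coeff:
  "fact k * stable_coeff a r k = (\<Sum>K\<le>k. (-1) ^ K * of_nat (k choose K) * ffact (of_nat K * a) r)"
  by (simp add: stable_coeff_def)

lemma stable_coeff_Suc_Suc:
  "stable_coeff a (Suc r) (Suc k)
     = (of_nat (Suc k) * a - of_nat r) * stable_coeff a r (Suc k) - a * stable_coeff a r k"
proof -
  define g where "g K = (-1) ^ K * ffact (of_nat K * a) r" for K
  have "fact (Suc k) * (stable_coeff a (Suc r) (Suc k) - (of_nat (Suc k) * a - of_nat r) * stable_coeff a r (Suc k))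
      = fact (Suc k) * stable_coeff a (Suc r) (Suc k) - (of_nat (Suc k) * a - of_nat r) * (fact (Suc k) * stable_coeff a r (Suc k))"
    by (simp add: algebra_simps)
  also have "\<dots> = (\<Sum>K\<le>Suc k. g K * (of_nat (Suc k choose K) * (of_nat K - of_nat (Suc k))) * a)"
    unfolding fact_mult_stable_coeff sum_distrib_left sum_subtractf[symmetric]
    by (intro sum.cong refl) (simp add: g_def ffact_Suc algebra_simps)
  also have "\<dots> = - (of_nat (Suc k) * a * (\<Sum>K\<le>Suc k. g K * of_nat (k choose K)))"
    using of_nat_choose_Suc_mult[of k, where 'a=real]
    by (simp add: sum_distrib_left sum_negf[symmetric] algebra_simps)
  also have "(\<Sum>K\<le>Suc k. g K * of_nat (k choose K)) = fact k * stable_coeff a r k"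
    by (simp add: fact_mult_stable_coeff g_def binomial_eq_0 mult_ac)
  also have "- (of_nat (Suc k) * a * (fact k * stable_coeff a r k)) = fact (Suc k) * (- a * stable_coeff a r k)"
    by (simp add: algebra_simps)
  finally have "stable_coeff a (Suc r) (Suc k) - (of_nat (Suc k) * a - of_nat r) * stable_coeff a r (Suc k)
      = - a * stable_coeff a r k"
    by (subst (asm) mult_cancel_left) simp
  then show ?thesis by (simp add: algebra_simps)
qed

lemma stable_coeff_eq_0: "r < k \<Longrightarrow> stable_coeff a r k = 0"
proof (induction r arbitrary: k)
  case 0
  then show ?case by (simp add: stable_coeff_0_left)
next
  case (Suc r)
  then obtain k' where "k = Suc k'" by (cases k) auto
  with Suc show ?case by (simp add: stable_coeff_Suc_Suc)
qed

lemma stable_coeff_convolution: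
  "(\<Sum>b\<le>r. of_nat (r choose b) * ffact a b * stable_coeff a (r - b) k)
     = stable_coeff a r k - of_nat (Suc k) * stable_coeff a r (Suc k)"
proof -
  define f where "f K = ffact (of_nat K * a) r" for K
  have "(\<Sum>b\<le>r. of_nat (r choose b) * ffact a b * stable_coeff a (r - b) k)
      = (\<Sum>K\<le>k. (-1) ^ K * of_nat (k choose K) *
           (\<Sum>b\<le>r. of_nat (r choose b) * ffact a b * ffact (of_nat K * a) (r - b))) / fact k"
    unfolding stable_coeff_def sum_divide_distrib sum_distrib_left
    by (subst sum.swap) (simp add: algebra_simps)
  also have "\<dots> = (\<Sum>K\<le>k. (-1) ^ K * of_nat (k choose K) * f (Suc K)) / fact k"
  proof -
    have "f (Suc K) = (\<Sum>b\<le>r. of_nat (r choose b) * ffact a b * ffact (of_nat K * a) (r - b))" for K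
      using ffact_add[of a "of_nat K * a" r] by (simp add: f_def algebra_simps)
    then show ?thesis by simp
  qed
  also have "\<dots> = ((\<Sum>K\<le>k. (-1) ^ K * of_nat (k choose K) * f K)
                    - (\<Sum>K\<le>Suc k. (-1) ^ K * of_nat (Suc k choose K) * f K)) / fact k"
    unfolding alternating_choose_sum_Suc by (simp add: sum_subtractf algebra_simps)
  also have "\<dots> = stable_coeff a r k - of_nat (Suc k) * stable_coeff a r (Suc k)"
    unfolding stable_coeff_def f_def diff_divide_distrib by (simp del: of_nat_Suc sum.atMost_Suc)
  finally show ?thesis .
qed

(* (-1)^r (d/du)^r exp(-t u^a), i.e. the integral of x^r exp(-u x) against a law with Laplace
   transform exp(-t u^a). *)
definition stable_moment :: "real \<Rightarrow> real \<Rightarrow> nat \<Rightarrow> real \<Rightarrow> real" where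
  "stable_moment a t r u = (-1) ^ r * exp (- t * u powr a) *
     (\<Sum>k\<le>r. stable_coeff a r k * t ^ k * u powr (of_nat k * a - of_nat r))"

lemma stable_moment_0: "0 < u \<Longrightarrow> stable_moment a t 0 u = exp (- t * u powr a)"
  by (simp add: stable_moment_def stable_coeff_0_left)

lemma stable_moment_time_0: "0 < u \<Longrightarrow> stable_moment a 0 r u = (if r = 0 then 1 else 0)"
  by (cases r) (auto simp: stable_moment_def stable_coeff_0_right stable_coeff_0_left intro!: sum.neutral)

lemma stable_coeff_sum_Suc:
  "(\<Sum>k\<le>Suc r. stable_coeff a (Suc r) k * t ^ k * p k)
     = (\<Sum>k\<le>r. stable_coeff a r k * t ^ k * ((of_nat k * a - of_nat r) * p k - a * t * p (Suc k)))"
proof -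
  define h where "h k = (of_nat k * a - of_nat r) * stable_coeff a r k * t ^ k * p k" for k
  have "(\<Sum>k\<le>r. h k) = (\<Sum>k\<le>Suc r. h k)"
    by (simp add: h_def stable_coeff_eq_0)
  also have "\<dots> = (\<Sum>k\<le>r. h (Suc k))"
    by (subst sum.atMost_Suc_shift) (simp add: h_def stable_coeff_0_right)
  finally have h_shift: "(\<Sum>k\<le>r. h k) = (\<Sum>k\<le>r. h (Suc k))" .
  have "(\<Sum>k\<le>Suc r. stable_coeff a (Suc r) k * t ^ k * p k)
      = (\<Sum>k\<le>r. stable_coeff a (Suc r) (Suc k) * t ^ Suc k * p (Suc k))"
    by (subst sum.atMost_Suc_shift) (simp add: stable_coeff_0_right)
  also have "\<dots> = (\<Sum>k\<le>r. h (Suc k)) - (\<Sum>k\<le>r. a * stable_coeff a r k * t ^ Suc k * p (Suc k))"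
    by (simp add: h_def stable_coeff_Suc_Suc sum_subtractf[symmetric] algebra_simps)
  also have "\<dots> = (\<Sum>k\<le>r. stable_coeff a r k * t ^ k * ((of_nat k * a - of_nat r) * p k - a * t * p (Suc k)))"
    unfolding h_shift[symmetric] by (simp add: h_def sum_subtractf[symmetric] algebra_simps)
  finally show ?thesis .
qed

lemma has_real_derivative_stable_moment_u:
  assumes u: "0 < u"
  shows "((\<lambda>u. stable_moment a t r u) has_real_derivative - stable_moment a t (Suc r) u) (at u)"
proof -
  define e where "e u = exp (- t * u powr a)" for u
  define p where "p k = u powr (of_nat k * a - of_nat r - 1)" for k
  have de: "(e has_real_derivative e u * (- t * (a * u powr (a - 1)))) (at u)"
    unfolding e_def using u by (auto intro!: derivative_eq_intros)
  have ds: "((\<lambda>u. \<Sum>k\<le>r. stable_coeff a r k * t ^ k * u powr (of_nat k * a - of_nat r)) has_real_derivative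
      (\<Sum>k\<le>r. stable_coeff a r k * t ^ k * ((of_nat k * a - of_nat r) * p k))) (at u)"
    unfolding p_def by (intro DERIV_sum DERIV_cmult has_real_derivative_powr u)
  have powr_Suc: "u powr (a - 1) * u powr (of_nat k * a - of_nat r) = p (Suc k)" for k
    unfolding p_def powr_add[symmetric] by (simp add: algebra_simps)
  have "e u * (- t * (a * u powr (a - 1))) * (\<Sum>k\<le>r. stable_coeff a r k * t ^ k * u powr (of_nat k * a - of_nat r))
      + (\<Sum>k\<le>r. stable_coeff a r k * t ^ k * ((of_nat k * a - of_nat r) * p k)) * e u
      = e u * (\<Sum>k\<le>Suc r. stable_coeff a (Suc r) k * t ^ k * p k)"
    unfolding stable_coeff_sum_Suc sum_distrib_left sum_distrib_right sum.distrib[symmetric]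
    by (intro sum.cong refl) (simp add: powr_Suc[symmetric] algebra_simps)
  then have "((\<lambda>u. e u * (\<Sum>k\<le>r. stable_coeff a r k * t ^ k * u powr (of_nat k * a - of_nat r)))
      has_real_derivative e u * (\<Sum>k\<le>Suc r. stable_coeff a (Suc r) k * t ^ k * p k)) (at u)"
    using DERIV_mult[OF de ds] by simp
  moreover have "p k = u powr (of_nat k * a - of_nat (Suc r))" for k
    by (simp add: p_def algebra_simps)
  ultimately have "((\<lambda>u. e u * (\<Sum>k\<le>r. stable_coeff a r k * t ^ k * u powr (of_nat k * a - of_nat r)))
      has_real_derivative e u * (\<Sum>k\<le>Suc r. stable_coeff a (Suc r) k * t ^ k * u powr (of_nat k * a - of_nat (Suc r))))
      (at u)"
    by simp
  from DERIV_cmult[OF this, of "(-1) ^ r"] show ?thesis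
    by (simp add: stable_moment_def e_def mult.assoc)
qed

lemma stable_moment_convolution:
  assumes u: "0 < u"
  shows "(\<Sum>b\<le>r. of_nat (r choose b) * ffact a b * (-1) ^ b * u powr (a - of_nat b) * stable_moment a t (r - b) u)
       = (-1) ^ r * exp (- t * u powr a) *
         (\<Sum>k\<le>r. (stable_coeff a r k - of_nat (Suc k) * stable_coeff a r (Suc k)) * t ^ k
                    * u powr (of_nat (Suc k) * a - of_nat r))"
proof -
  define q where "q k = t ^ k * u powr (of_nat (Suc k) * a - of_nat r)" for k
  have term_b: "of_nat (r choose b) * ffact a b * (-1) ^ b * u powr (a - of_nat b) * stable_moment a t (r - b) u
      = (-1) ^ r * exp (- t * u powr a) *
        (\<Sum>k\<le>r. of_nat (r choose b) * ffact a b * stable_coeff a (r - b) k * q k)" if b: "b \<le> r" for b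
  proof -
    have sign: "(-1::real) ^ b * (-1) ^ (r - b) = (-1) ^ r"
      using b by (simp add: power_add[symmetric])
    have powr_q: "u powr (a - of_nat b) * (t ^ k * u powr (of_nat k * a - of_nat (r - b))) = q k" for k
      unfolding q_def mult.left_commute[of _ "t ^ k"] powr_add[symmetric]
      using b by (simp add: algebra_simps)
    have "of_nat (r choose b) * ffact a b * (-1) ^ b * u powr (a - of_nat b) * stable_moment a t (r - b) u
        = (-1) ^ b * (-1) ^ (r - b) * exp (- t * u powr a) *
          (\<Sum>k\<le>r - b. of_nat (r choose b) * ffact a b * stable_coeff a (r - b) k
             * (u powr (a - of_nat b) * (t ^ k * u powr (of_nat k * a - of_nat (r - b)))))"
      by (simp add: stable_moment_def sum_distrib_left mult_ac)
    also have "\<dots> = (-1) ^ r * exp (- t * u powr a) *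
          (\<Sum>k\<le>r - b. of_nat (r choose b) * ffact a b * stable_coeff a (r - b) k * q k)"
      by (simp only: sign powr_q)
    also have "(\<Sum>k\<le>r - b. of_nat (r choose b) * ffact a b * stable_coeff a (r - b) k * q k)
        = (\<Sum>k\<le>r. of_nat (r choose b) * ffact a b * stable_coeff a (r - b) k * q k)"
      by (rule sum.mono_neutral_left) (auto simp: stable_coeff_eq_0)
    finally show ?thesis .
  qed
  have "(\<Sum>b\<le>r. of_nat (r choose b) * ffact a b * (-1) ^ b * u powr (a - of_nat b) * stable_moment a t (r - b) u)
      = (-1) ^ r * exp (- t * u powr a) *
        (\<Sum>k\<le>r. (\<Sum>b\<le>r. of_nat (r choose b) * ffact a b * stable_coeff a (r - b) k) * q k)"
    by (simp add: term_b sum_distrib_left sum_distrib_right) (subst sum.swap, simp add: mult_ac)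
  then show ?thesis
    unfolding stable_coeff_convolution by (simp add: q_def mult_ac)
qed

lemma has_real_derivative_stable_moment_t:
  assumes u: "0 < u"
  shows "((\<lambda>t. stable_moment a t r u) has_real_derivative
           - (\<Sum>b\<le>r. of_nat (r choose b) * ffact a b * (-1) ^ b * u powr (a - of_nat b)
                      * stable_moment a t (r - b) u)) (at t)"
proof -
  define e where "e t = exp (- t * u powr a)" for t
  define w where "w k = u powr (of_nat k * a - of_nat r)" for k
  have de: "(e has_real_derivative e t * (- (u powr a))) (at t)"
    unfolding e_def by (auto intro!: derivative_eq_intros)
  have ds: "((\<lambda>t. \<Sum>k\<le>r. stable_coeff a r k * t ^ k * w k) has_real_derivative
      (\<Sum>k\<le>r. stable_coeff a r k * (of_nat k * t ^ (k - 1)) * w k)) (at t)"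
    by (intro DERIV_sum DERIV_cmult_right DERIV_cmult DERIV_pow[unfolded One_nat_def[symmetric]])
  have w_Suc: "u powr a * w k = w (Suc k)" for k
    unfolding w_def powr_add[symmetric] by (simp add: algebra_simps)
  have shift: "(\<Sum>k\<le>r. stable_coeff a r k * (of_nat k * t ^ (k - 1)) * w k)
      = (\<Sum>k\<le>r. of_nat (Suc k) * stable_coeff a r (Suc k) * t ^ k * w (Suc k))"
  proof -
    have "(\<Sum>k\<le>r. stable_coeff a r k * (of_nat k * t ^ (k - 1)) * w k)
        = (\<Sum>k\<le>Suc r. stable_coeff a r k * (of_nat k * t ^ (k - 1)) * w k)"
      by (simp add: stable_coeff_eq_0)
    also have "\<dots> = (\<Sum>k\<le>r. of_nat (Suc k) * stable_coeff a r (Suc k) * t ^ k * w (Suc k))"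
      by (subst sum.atMost_Suc_shift) (simp add: mult_ac)
    finally show ?thesis .
  qed
  have "e t * (- (u powr a)) * (\<Sum>k\<le>r. stable_coeff a r k * t ^ k * w k)
      + (\<Sum>k\<le>r. stable_coeff a r k * (of_nat k * t ^ (k - 1)) * w k) * e t
      = - (e t * (\<Sum>k\<le>r. (stable_coeff a r k - of_nat (Suc k) * stable_coeff a r (Suc k)) * t ^ k * w (Suc k)))"
    unfolding shift sum_distrib_left sum_distrib_right sum.distrib[symmetric] sum_negf[symmetric]
    by (intro sum.cong refl) (simp add: w_Suc[symmetric] algebra_simps)
  then have "((\<lambda>t. e t * (\<Sum>k\<le>r. stable_coeff a r k * t ^ k * w k)) has_real_derivative
      - (e t * (\<Sum>k\<le>r. (stable_coeff a r k - of_nat (Suc k) * stable_coeff a r (Suc k)) * t ^ k * w (Suc k)))) (at t)"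
    using DERIV_mult[OF de ds] by simp
  from DERIV_cmult[OF this, of "(-1) ^ r"] show ?thesis
    unfolding stable_moment_convolution[OF u] by (simp add: stable_moment_def e_def w_def mult.assoc)
qed

section \<open>Moments of a measure from its Laplace transform\<close>

lemma abs_exp_diff_le: "\<bar>exp a - exp b\<bar> \<le> \<bar>a - b\<bar> * exp (max a b)" for a b :: real
proof -
  have *: "exp y - exp x \<le> (y - x) * exp y" if "x \<le> y" for x y :: real
  proof -
    have "exp y * (1 + (x - y)) \<le> exp y * exp (x - y)"
      by (intro mult_left_mono exp_ge_add_one_self) auto
    then show ?thesis by (simp add: exp_diff algebra_simps)
  qed
  show ?thesis
    using *[of a b] *[of b a] by (cases "a \<le> b") (auto simp: abs_if max_def)
qed

lemma power_div_fact_le_exp: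
  fixes x :: real
  assumes "0 \<le> x"
  shows "x ^ n / fact n \<le> exp x"
proof -
  have "x ^ n / fact n \<le> (\<Sum>k\<le>n. x ^ k / fact k)"
    by (rule member_le_sum) (use assms in auto)
  also have "\<dots> \<le> exp x"
    using assms summable_exp_generic[of x]
    by (auto simp: exp_def divide_inverse ac_simps intro!: sum_le_suminf)
  finally show ?thesis .
qed

lemma pow_mult_exp_le:
  fixes x c :: real
  assumes "0 \<le> x" "0 < c"
  shows "x ^ m * exp (- c * x) \<le> fact m / c ^ m"
proof -
  have "(c * x) ^ m / fact m \<le> exp (c * x)"
    using assms by (intro power_div_fact_le_exp) simp
  then have "x ^ m * exp (- c * x) \<le> exp (c * x) * exp (- c * x) * (fact m / c ^ m)"
    using assms by (simp add: field_simps)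
  then show ?thesis by (simp add: exp_minus field_simps)
qed

lemma abs_exp_difference_quotient_le:
  fixes x u h :: real
  assumes x: "0 \<le> x" and h: "h \<noteq> 0" "\<bar>h\<bar> \<le> u / 2"
  shows "\<bar>x ^ r * (exp (- (u + h) * x) - exp (- u * x)) / h\<bar> \<le> x ^ Suc r * exp (- (u / 2) * x)"
proof -
  have "max (- (u + h) * x) (- u * x) \<le> - (u / 2) * x"
    using h x mult_right_mono[of "- h" "u / 2" x] by (auto simp: max_def algebra_simps)
  then have "\<bar>h\<bar> * x * exp (max (- (u + h) * x) (- u * x)) \<le> \<bar>h\<bar> * x * exp (- (u / 2) * x)"
    using x by (intro mult_left_mono) auto
  moreover have "\<bar>- (u + h) * x - - u * x\<bar> = \<bar>h\<bar> * x"
    using x by (simp add: abs_mult algebra_simps)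
  ultimately have "\<bar>exp (- (u + h) * x) - exp (- u * x)\<bar> \<le> (\<bar>h\<bar> * x) * exp (- (u / 2) * x)"
    using abs_exp_diff_le[of "- (u + h) * x" "- u * x"] by simp
  then have "x ^ r * \<bar>exp (- (u + h) * x) - exp (- u * x)\<bar> / \<bar>h\<bar> \<le> x ^ r * (\<bar>h\<bar> * x * exp (- (u / 2) * x)) / \<bar>h\<bar>"
    using x by (intro divide_right_mono mult_left_mono) auto
  then show ?thesis
    using x h by (simp add: abs_mult mult_ac)
qed

locale nonneg_borel_measure = finite_measure M for M :: "real measure" +
  assumes sets_eq_borel: "sets M = sets borel"
    and AE_nonneg: "AE x in M. 0 \<le> x"
begin

lemma measurable_from_borel: "f \<in> borel_measurable borel \<Longrightarrow> f \<in> borel_measurable M"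
  using measurable_cong_sets[OF sets_eq_borel refl] by blast

lemma integrable_pow_mult_exp:
  assumes "0 < c"
  shows "integrable M (\<lambda>x. x ^ m * exp (- c * x))"
proof (rule integrable_const_bound[where B = "fact m / c ^ m"])
  show "AE x in M. norm (x ^ m * exp (- c * x)) \<le> fact m / c ^ m"
    using AE_nonneg by eventually_elim (use pow_mult_exp_le[OF _ assms] in auto)
  show "(\<lambda>x. x ^ m * exp (- c * x)) \<in> borel_measurable M"
    by (rule measurable_from_borel) measurable
qed

lemma tendsto_laplace_difference_quotient:
  assumes u: "0 < u"
  shows "((\<lambda>h. \<integral>x. x ^ r * (exp (- (u + h) * x) - exp (- u * x)) / h \<partial>M) \<longlongrightarrow>
           - (\<integral>x. x ^ Suc r * exp (- u * x) \<partial>M)) (at 0 within {- (u / 2) <..< u / 2})"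
proof -
  define Q where "Q h x = x ^ r * (exp (- (u + h) * x) - exp (- u * x)) / h" for h x
  have "((\<lambda>h. \<integral>x. Q h x \<partial>M) \<longlongrightarrow> (\<integral>x. - (x ^ Suc r * exp (- u * x)) \<partial>M))
          (at 0 within {- (u / 2) <..< u / 2})"
  proof (subst tendsto_at_iff_sequentially, intro allI impI)
    fix X :: "nat \<Rightarrow> real"
    assume X: "\<forall>i. X i \<in> {- (u / 2) <..< u / 2} - {0}" and X0: "X \<longlonglongrightarrow> 0"
    show "((\<lambda>h. \<integral>x. Q h x \<partial>M) \<circ> X) \<longlonglongrightarrow> (\<integral>x. - (x ^ Suc r * exp (- u * x)) \<partial>M)"
      unfolding comp_def
    proof (rule integral_dominated_convergence[where w = "\<lambda>x. x ^ Suc r * exp (- (u / 2) * x)"])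
      show "(\<lambda>x. - (x ^ Suc r * exp (- u * x))) \<in> borel_measurable M"
        by (rule measurable_from_borel) measurable
      show "Q (X i) \<in> borel_measurable M" for i
        unfolding Q_def by (rule measurable_from_borel) measurable
      show "integrable M (\<lambda>x. x ^ Suc r * exp (- (u / 2) * x))"
        using u by (intro integrable_pow_mult_exp) simp
      show "AE x in M. norm (Q (X i) x) \<le> x ^ Suc r * exp (- (u / 2) * x)" for i
        using AE_nonneg
      proof eventually_elim
        case (elim x)
        show ?case
          unfolding Q_def real_norm_def
          using X[rule_format, of i] elim by (intro abs_exp_difference_quotient_le) auto
      qed
      show "AE x in M. (\<lambda>i. Q (X i) x) \<longlonglongrightarrow> - (x ^ Suc r * exp (- u * x))"
      proof (rule AE_I2)
        fix x :: real
        have "((\<lambda>v. x ^ r * exp (- v * x)) has_real_derivative - (x ^ Suc r * exp (- u * x))) (at u)"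
          by (auto intro!: derivative_eq_intros)
        then have "((\<lambda>h. Q h x) \<longlongrightarrow> - (x ^ Suc r * exp (- u * x))) (at 0)"
          unfolding DERIV_def Q_def by (simp add: right_diff_distrib)
        then show "(\<lambda>i. Q (X i) x) \<longlonglongrightarrow> - (x ^ Suc r * exp (- u * x))"
          using X X0 by (subst (asm) tendsto_at_iff_sequentially) (auto simp: comp_def)
      qed
    qed
  qed
  then show ?thesis
    unfolding Q_def by simp
qed

lemma has_real_derivative_laplace_moment:
  assumes u: "0 < u"
  shows "((\<lambda>v. \<integral>x. x ^ r * exp (- v * x) \<partial>M) has_real_derivative
           - (\<integral>x. x ^ Suc r * exp (- u * x) \<partial>M)) (at u)"
proof -
  define F where "F v = (\<integral>x. x ^ r * exp (- v * x) \<partial>M)" for v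
  have quotient_eq: "(\<integral>x. x ^ r * (exp (- (u + h) * x) - exp (- u * x)) / h \<partial>M) = (F (u + h) - F u) / h"
    if "h \<in> {- (u / 2) <..< u / 2}" for h
  proof -
    have "0 < u + h" using that by simp
    then have "F (u + h) - F u = (\<integral>x. x ^ r * exp (- (u + h) * x) - x ^ r * exp (- u * x) \<partial>M)"
      unfolding F_def using u by (intro Bochner_Integration.integral_diff[symmetric] integrable_pow_mult_exp)
    then show ?thesis
      by (simp add: right_diff_distrib)
  qed
  have "((\<lambda>h. (F (u + h) - F u) / h) \<longlongrightarrow> - (\<integral>x. x ^ Suc r * exp (- u * x) \<partial>M))
          (at 0 within {- (u / 2) <..< u / 2})"
    using tendsto_laplace_difference_quotient[OF u, of r]
    by (rule Lim_transform_within_open[where s = "{- (u / 2) <..< u / 2}"]) (use u quotient_eq in auto)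
  moreover have "at 0 within {- (u / 2) <..< u / 2} = at 0"
    using u by (intro at_within_open) auto
  ultimately show ?thesis
    unfolding DERIV_def F_def by simp
qed

lemma laplace_moment_eq_stable_moment:
  assumes laplace: "\<And>s. 0 < s \<Longrightarrow> (\<integral>x. exp (- s * x) \<partial>M) = exp (- t * s powr a)"
    and u: "0 < u"
  shows "(\<integral>x. x ^ r * exp (- u * x) \<partial>M) = stable_moment a t r u"
  using u
proof (induction r arbitrary: u)
  case 0
  then show ?case using laplace stable_moment_0 by simp
next
  case (Suc r)
  have "((\<lambda>v. stable_moment a t r v) has_real_derivative - (\<integral>x. x ^ Suc r * exp (- u * x) \<partial>M)) (at u)"
    by (rule has_field_derivative_transform_within_open[OF has_real_derivative_laplace_moment[OF Suc.prems],
          of "{0<..}"]) (use Suc in auto)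
  from DERIV_unique[OF this has_real_derivative_stable_moment_u[OF Suc.prems]] show ?case
    by simp
qed

end

section \<open>Jump configurations\<close>

lemma sum_PiE_choose:
  fixes h :: "'i \<Rightarrow> 'b \<Rightarrow> nat" and g :: "'i \<Rightarrow> 'b \<Rightarrow> 'a :: comm_semiring_1" and N :: "'i \<Rightarrow> nat"
  assumes "finite S" "\<And>i. i \<in> S \<Longrightarrow> finite (B i)"
    and "\<And>i c. i \<in> S \<Longrightarrow> (\<Sum>b\<in>B i. if h i b = c then g i b else 0) = of_nat (N i choose c)"
  shows "(\<Sum>y\<in>PiE S B. if (\<Sum>i\<in>S. h i (y i)) = a then \<Prod>i\<in>S. g i (y i) else 0)
         = of_nat ((\<Sum>i\<in>S. N i) choose a)"
  using assms
proof (induction S arbitrary: a rule: finite_induct)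
  case empty
  then show ?case by (cases a) simp_all
next
  case (insert i S)
  define N' where "N' = (\<Sum>i\<in>S. N i)"
  define F where "F y = (if (\<Sum>i\<in>insert i S. h i (y i)) = a then \<Prod>i\<in>insert i S. g i (y i) else 0)" for y
  have F_upd: "F (z(i := b)) = g i b * (if h i b \<le> a \<and> (\<Sum>i\<in>S. h i (z i)) = a - h i b then \<Prod>i\<in>S. g i (z i) else 0)"
    for z b
  proof -
    have "(\<Sum>i'\<in>S. h i' ((z(i := b)) i')) = (\<Sum>i\<in>S. h i (z i))"
         "(\<Prod>i'\<in>S. g i' ((z(i := b)) i')) = (\<Prod>i\<in>S. g i (z i))"
      using insert.hyps by (auto intro!: sum.cong prod.cong)
    then show ?thesis unfolding F_def using insert.hyps by auto
  qed
  have "(\<Sum>y\<in>PiE (insert i S) B. F y) = (\<Sum>(b, z)\<in>B i \<times> PiE S B. F (z(i := b)))"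
    using insert.hyps
    by (intro sum.reindex_bij_witness[of _ "\<lambda>(b, z). z(i := b)" "\<lambda>y. (y i, y(i := undefined))"])
       (auto simp: PiE_def extensional_def)
  also have "\<dots> = (\<Sum>b\<in>B i. g i b * (if h i b \<le> a then of_nat (N' choose (a - h i b)) else 0))"
    unfolding sum.cartesian_product[symmetric] F_upd sum_distrib_left[symmetric]
    using insert by (intro sum.cong refl) (auto simp: N'_def)
  also have "\<dots> = (\<Sum>b\<in>B i. \<Sum>c\<le>a. if h i b = c then g i b * of_nat (N' choose (a - c)) else 0)"
    by (rule sum.cong) auto
  also have "\<dots> = (\<Sum>c\<le>a. (\<Sum>b\<in>B i. if h i b = c then g i b else 0) * of_nat (N' choose (a - c)))"
    by (subst sum.swap) (auto simp: sum_distrib_right intro!: sum.cong)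
  also have "\<dots> = (\<Sum>c\<le>a. of_nat (N i choose c) * of_nat (N' choose (a - c)))"
    using insert.prems by (intro sum.cong) auto
  also have "\<dots> = of_nat ((N i + N') choose a)"
    unfolding vandermonde[symmetric] by simp
  finally show ?case
    unfolding F_def N'_def using insert.hyps by simp
qed

(* A jump configuration x records the number x i j of jumps of size j of the i-th component,
   for i in {1..q} and j in {1..k i}. *)
definition Omega_prod :: "nat \<Rightarrow> (nat \<Rightarrow> nat) \<Rightarrow> (nat \<Rightarrow> nat) \<Rightarrow> (nat \<Rightarrow> nat \<Rightarrow> nat) set" where
  "Omega_prod q k n = PiE {1..q} (\<lambda>i. Omega (k i) (n i))"

definition jumps :: "nat \<Rightarrow> (nat \<Rightarrow> nat) \<Rightarrow> (nat \<Rightarrow> nat \<Rightarrow> nat) \<Rightarrow> nat" where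
  "jumps q k x = (\<Sum>i\<in>{1..q}. \<Sum>j\<in>{1..k i}. x i j)"

definition jump_sizes :: "nat \<Rightarrow> (nat \<Rightarrow> nat) \<Rightarrow> (nat \<Rightarrow> nat \<Rightarrow> nat) \<Rightarrow> nat \<Rightarrow> nat" where
  "jump_sizes q k x = (\<lambda>i. if i \<in> {1..q} then \<Sum>j\<in>{1..k i}. j * x i j else 0)"

definition rate_weight :: "nat \<Rightarrow> (nat \<Rightarrow> nat) \<Rightarrow> (nat \<Rightarrow> nat \<Rightarrow> real) \<Rightarrow> (nat \<Rightarrow> nat \<Rightarrow> nat) \<Rightarrow> real" where
  "rate_weight q k lam x = (\<Prod>i\<in>{1..q}. \<Prod>j\<in>{1..k i}. lam i j ^ x i j / fact (x i j))"

definition sub_indices :: "nat \<Rightarrow> (nat \<Rightarrow> nat) \<Rightarrow> (nat \<Rightarrow> nat \<Rightarrow> nat) \<Rightarrow> (nat \<Rightarrow> nat \<Rightarrow> nat) set" where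
  "sub_indices q k x = PiE {1..q} (\<lambda>i. PiE {1..k i} (\<lambda>j. {0..x i j}))"

definition index_add :: "nat \<Rightarrow> (nat \<Rightarrow> nat) \<Rightarrow> (nat \<Rightarrow> nat \<Rightarrow> nat) \<Rightarrow> (nat \<Rightarrow> nat \<Rightarrow> nat) \<Rightarrow> nat \<Rightarrow> nat \<Rightarrow> nat" where
  "index_add q k x y = (\<lambda>i\<in>{1..q}. \<lambda>j\<in>{1..k i}. x i j + y i j)"

definition index_diff :: "nat \<Rightarrow> (nat \<Rightarrow> nat) \<Rightarrow> (nat \<Rightarrow> nat \<Rightarrow> nat) \<Rightarrow> (nat \<Rightarrow> nat \<Rightarrow> nat) \<Rightarrow> nat \<Rightarrow> nat \<Rightarrow> nat" where
  "index_diff q k x y = (\<lambda>i\<in>{1..q}. \<lambda>j\<in>{1..k i}. x i j - y i j)"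

definition NQ_le :: "nat \<Rightarrow> (nat \<Rightarrow> nat) \<Rightarrow> (nat \<Rightarrow> nat) set" where
  "NQ_le q n = {m \<in> NQ q. \<forall>i\<in>{1..q}. m i \<le> n i}"

lemma Omega_subset: "Omega K m \<subseteq> PiE {1..K} (\<lambda>_. {0..m})"
proof
  fix x assume x: "x \<in> Omega K m"
  have "x j \<le> m" if j: "j \<in> {1..K}" for j
  proof -
    have "x j \<le> j * x j" using j by simp
    also have "\<dots> \<le> (\<Sum>j\<in>{1..K}. j * x j)" by (rule member_le_sum) (use j in auto)
    finally show ?thesis using x by (simp add: Omega_def)
  qed
  then show "x \<in> PiE {1..K} (\<lambda>_. {0..m})" using x by (auto simp: Omega_def PiE_def)
qed

lemma finite_Omega: "finite (Omega K m)"
  by (rule finite_subset[OF Omega_subset]) (auto intro: finite_PiE)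

lemma finite_Omega_prod: "finite (Omega_prod q k n)"
  unfolding Omega_prod_def by (auto intro!: finite_PiE finite_Omega)

lemma finite_sub_indices: "finite (sub_indices q k x)"
  unfolding sub_indices_def by (auto intro!: finite_PiE)

lemma finite_NQ_le: "finite (NQ_le q n)"
proof -
  have "NQ_le q n \<subseteq> (\<lambda>f i. if i \<in> {1..q} then f i else 0) ` PiE {1..q} (\<lambda>i. {0..n i})"
  proof
    fix m assume m: "m \<in> NQ_le q n"
    then have "m = (\<lambda>i. if i \<in> {1..q} then restrict m {1..q} i else 0)"
      by (auto simp: NQ_le_def NQ_def fun_eq_iff)
    moreover have "restrict m {1..q} \<in> PiE {1..q} (\<lambda>i. {0..n i})"
      using m by (auto simp: NQ_le_def)
    ultimately show "m \<in> (\<lambda>f i. if i \<in> {1..q} then f i else 0) ` PiE {1..q} (\<lambda>i. {0..n i})"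
      by blast
  qed
  then show ?thesis by (rule finite_subset) (auto intro!: finite_PiE)
qed

lemma Omega_prod_iff:
  "x \<in> Omega_prod q k n \<longleftrightarrow> x \<in> extensional {1..q} \<and>
     (\<forall>i\<in>{1..q}. x i \<in> extensional {1..k i} \<and> (\<Sum>j\<in>{1..k i}. j * x i j) = n i)"
  by (auto simp: Omega_prod_def Omega_def PiE_iff)

lemma sub_indices_iff:
  "y \<in> sub_indices q k x \<longleftrightarrow> y \<in> extensional {1..q} \<and>
     (\<forall>i\<in>{1..q}. y i \<in> extensional {1..k i} \<and> (\<forall>j\<in>{1..k i}. y i j \<le> x i j))"
  by (auto simp: sub_indices_def PiE_iff)

lemma sum_sub_indices_choose:
  "(\<Sum>y\<in>sub_indices q k x. if jumps q k y = a then \<Prod>i\<in>{1..q}. \<Prod>j\<in>{1..k i}. real (x i j choose y i j) else 0)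
     = real (jumps q k x choose a)"
  unfolding sub_indices_def jumps_def
proof (rule sum_PiE_choose)
  fix i c assume "i \<in> {1..q}"
  show "(\<Sum>b\<in>PiE {1..k i} (\<lambda>j. {0..x i j}).
          if (\<Sum>j\<in>{1..k i}. b j) = c then \<Prod>j\<in>{1..k i}. real (x i j choose b j) else 0)
        = real ((\<Sum>j\<in>{1..k i}. x i j) choose c)"
    by (rule sum_PiE_choose) (auto simp: binomial_eq_0)
qed (auto intro: finite_PiE)

lemma jumps_index_diff:
  assumes "y \<in> sub_indices q k x"
  shows "jumps q k x = jumps q k y + jumps q k (index_diff q k x y)"
proof -
  have "jumps q k x = (\<Sum>i\<in>{1..q}. \<Sum>j\<in>{1..k i}. y i j + (x i j - y i j))"
    unfolding jumps_def using assms by (intro sum.cong) (auto simp: sub_indices_iff)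
  then show ?thesis
    unfolding jumps_def index_diff_def by (simp add: sum.distrib)
qed

lemma rate_weight_mult_choose:
  assumes "y \<in> sub_indices q k x"
  shows "rate_weight q k lam x * (\<Prod>i\<in>{1..q}. \<Prod>j\<in>{1..k i}. real (x i j choose y i j))
       = rate_weight q k lam y * rate_weight q k lam (index_diff q k x y)"
proof -
  have "lam i j ^ x i j / fact (x i j) * real (x i j choose y i j)
      = lam i j ^ y i j / fact (y i j) * (lam i j ^ (x i j - y i j) / fact (x i j - y i j))"
    if "i \<in> {1..q}" "j \<in> {1..k i}" for i j
  proof -
    have le: "y i j \<le> x i j" using assms that by (auto simp: sub_indices_iff)
    then have "lam i j ^ x i j = lam i j ^ y i j * lam i j ^ (x i j - y i j)"
      by (simp add: power_add[symmetric])
    then show ?thesis using le by (simp add: binomial_fact)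
  qed
  then show ?thesis
    unfolding rate_weight_def index_diff_def prod.distrib[symmetric]
    by (intro prod.cong refl) auto
qed

lemma Omega_prod_index_diff:
  assumes x: "x \<in> Omega_prod q k n" and y: "y \<in> sub_indices q k x"
  shows "jump_sizes q k y \<in> NQ_le q n" "y \<in> Omega_prod q k (jump_sizes q k y)"
    "index_diff q k x y \<in> Omega_prod q k (\<lambda>i. n i - jump_sizes q k y i)"
    "index_add q k y (index_diff q k x y) = x"
proof -
  have le: "y i j \<le> x i j" if "i \<in> {1..q}" "j \<in> {1..k i}" for i j
    using y that by (auto simp: sub_indices_iff)
  have x_sum: "(\<Sum>j\<in>{1..k i}. j * x i j) = n i" if "i \<in> {1..q}" for i
    using x that by (auto simp: Omega_prod_iff)
  have y_le: "(\<Sum>j\<in>{1..k i}. j * y i j) \<le> n i" if "i \<in> {1..q}" for i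
    using le that x_sum[OF that, symmetric] by (auto intro!: sum_mono)
  have diff_sum: "(\<Sum>j\<in>{1..k i}. j * index_diff q k x y i j) = n i - jump_sizes q k y i"
    if i: "i \<in> {1..q}" for i
  proof -
    have "(\<Sum>j\<in>{1..k i}. j * index_diff q k x y i j) = (\<Sum>j\<in>{1..k i}. j * x i j - j * y i j)"
      using i by (intro sum.cong) (auto simp: index_diff_def diff_mult_distrib2)
    also have "\<dots> = (\<Sum>j\<in>{1..k i}. j * x i j) - (\<Sum>j\<in>{1..k i}. j * y i j)"
      using le i by (intro sum_subtractf_nat) auto
    finally show ?thesis using x_sum i by (simp add: jump_sizes_def)
  qed
  show "jump_sizes q k y \<in> NQ_le q n" "y \<in> Omega_prod q k (jump_sizes q k y)"
    "index_diff q k x y \<in> Omega_prod q k (\<lambda>i. n i - jump_sizes q k y i)"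
    using y y_le diff_sum
    by (auto simp: NQ_le_def NQ_def jump_sizes_def Omega_prod_iff sub_indices_iff index_diff_def)
  show "index_add q k y (index_diff q k x y) = x"
    using x le by (auto simp: fun_eq_iff index_add_def index_diff_def Omega_prod_iff extensional_def)
qed

lemma Omega_prod_index_add:
  assumes m: "m \<in> NQ_le q n" and y: "y \<in> Omega_prod q k m" and z: "z \<in> Omega_prod q k (\<lambda>i. n i - m i)"
  shows "index_add q k y z \<in> Omega_prod q k n" "y \<in> sub_indices q k (index_add q k y z)"
    "jump_sizes q k y = m" "index_diff q k (index_add q k y z) y = z"
proof -
  have "(\<Sum>j\<in>{1..k i}. j * index_add q k y z i j) = n i" if "i \<in> {1..q}" for i
    using assms that by (auto simp: index_add_def sum.distrib add_mult_distrib2 Omega_prod_iff NQ_le_def)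
  then show "index_add q k y z \<in> Omega_prod q k n"
    by (auto simp: Omega_prod_iff index_add_def)
  show "y \<in> sub_indices q k (index_add q k y z)"
    using y by (auto simp: sub_indices_iff Omega_prod_iff index_add_def)
  show "jump_sizes q k y = m"
    using m y by (auto simp: fun_eq_iff jump_sizes_def Omega_prod_iff NQ_le_def NQ_def)
  show "index_diff q k (index_add q k y z) y = z"
    using y z by (auto simp: fun_eq_iff index_add_def index_diff_def Omega_prod_iff extensional_def)
qed

lemma sum_Omega_prod_split:
  "(\<Sum>x\<in>Omega_prod q k n. \<Sum>y\<in>sub_indices q k x. G y (index_diff q k x y))
     = (\<Sum>m\<in>NQ_le q n. \<Sum>y\<in>Omega_prod q k m. \<Sum>z\<in>Omega_prod q k (\<lambda>i. n i - m i). G y z)"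
proof -
  define P where "P = Sigma (Omega_prod q k n) (sub_indices q k)"
  define T where "T = Sigma (NQ_le q n) (\<lambda>m. Omega_prod q k m \<times> Omega_prod q k (\<lambda>i. n i - m i))"
  have "(\<Sum>(x, y)\<in>P. G y (index_diff q k x y)) = (\<Sum>(m, y, z)\<in>T. G y z)"
    by (rule sum.reindex_bij_witness[of _ "\<lambda>(m, y, z). (index_add q k y z, y)"
                                           "\<lambda>(x, y). (jump_sizes q k y, y, index_diff q k x y)"])
       (auto simp: P_def T_def Omega_prod_index_diff Omega_prod_index_add)
  then show ?thesis
    unfolding P_def T_def
    by (simp add: sum.Sigma sum.cartesian_product finite_Omega_prod finite_sub_indices finite_NQ_le)
qed

lemma rate_weight_binomial_convolution:
  fixes c E :: "nat \<Rightarrow> real"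
  shows "(\<Sum>x\<in>Omega_prod q k n. rate_weight q k lam x *
            (\<Sum>b\<le>jumps q k x. of_nat (jumps q k x choose b) * c b * E (jumps q k x - b)))
       = (\<Sum>m\<in>NQ_le q n. \<Sum>y\<in>Omega_prod q k m. c (jumps q k y) * rate_weight q k lam y *
            (\<Sum>z\<in>Omega_prod q k (\<lambda>i. n i - m i). rate_weight q k lam z * E (jumps q k z)))"
proof -
  define G where "G y z = c (jumps q k y) * rate_weight q k lam y * (rate_weight q k lam z * E (jumps q k z))"
    for y z
  have inner: "rate_weight q k lam x * (\<Sum>b\<le>jumps q k x. of_nat (jumps q k x choose b) * c b * E (jumps q k x - b))
      = (\<Sum>y\<in>sub_indices q k x. G y (index_diff q k x y))" for x
  proof -
    define P where "P y = (\<Prod>i\<in>{1..q}. \<Prod>j\<in>{1..k i}. real (x i j choose y i j))" for y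
    have "(\<Sum>b\<le>jumps q k x. of_nat (jumps q k x choose b) * c b * E (jumps q k x - b))
        = (\<Sum>b\<le>jumps q k x. \<Sum>y\<in>sub_indices q k x.
             if jumps q k y = b then P y * c b * E (jumps q k x - b) else 0)"
      unfolding sum_sub_indices_choose[symmetric] P_def
      by (auto simp: sum_distrib_right intro!: sum.cong)
    also have "\<dots> = (\<Sum>y\<in>sub_indices q k x. P y * c (jumps q k y) * E (jumps q k (index_diff q k x y)))"
      by (subst sum.swap) (auto intro!: sum.cong simp: jumps_index_diff)
    finally have binomial_split: "(\<Sum>b\<le>jumps q k x. of_nat (jumps q k x choose b) * c b * E (jumps q k x - b))
        = (\<Sum>y\<in>sub_indices q k x. P y * c (jumps q k y) * E (jumps q k (index_diff q k x y)))" .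
    have "rate_weight q k lam x * (\<Sum>y\<in>sub_indices q k x. P y * c (jumps q k y) * E (jumps q k (index_diff q k x y)))
        = (\<Sum>y\<in>sub_indices q k x. G y (index_diff q k x y))"
      unfolding sum_distrib_left G_def
      by (intro sum.cong refl) (simp add: rate_weight_mult_choose[symmetric] P_def mult_ac)
    then show ?thesis by (simp only: binomial_split)
  qed
  have "(\<Sum>x\<in>Omega_prod q k n. \<Sum>y\<in>sub_indices q k x. G y (index_diff q k x y))
      = (\<Sum>m\<in>NQ_le q n. \<Sum>y\<in>Omega_prod q k m. c (jumps q k y) * rate_weight q k lam y *
            (\<Sum>z\<in>Omega_prod q k (\<lambda>i. n i - m i). rate_weight q k lam z * E (jumps q k z)))"
    unfolding sum_Omega_prod_split by (simp add: G_def sum_distrib_left)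
  then show ?thesis
    by (simp only: inner)
qed

lemma Omega_prod_jumps_eq_0:
  assumes "n \<in> NQ q"
  shows "{x \<in> Omega_prod q k n. jumps q k x = 0}
       = (if n = (\<lambda>_. 0) then {\<lambda>i\<in>{1..q}. \<lambda>j\<in>{1..k i}. 0} else {})"
proof -
  have zero: "x i j = 0" if "jumps q k x = 0" "i \<in> {1..q}" "j \<in> {1..k i}" for x i j
    using that by (simp add: jumps_def)
  have n0: "n = (\<lambda>_. 0)" if "x \<in> Omega_prod q k n" "jumps q k x = 0" for x
  proof
    fix i show "n i = 0"
    proof (cases "i \<in> {1..q}")
      case True
      then have "n i = (\<Sum>j\<in>{1..k i}. j * x i j)"
        using that(1) by (simp add: Omega_prod_iff)
      also have "\<dots> = 0"
        using zero[OF that(2) True] by simp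
      finally show ?thesis .
    next
      case False
      then show ?thesis using assms by (simp add: NQ_def)
    qed
  qed
  have x0: "x = (\<lambda>i\<in>{1..q}. \<lambda>j\<in>{1..k i}. 0)" if "x \<in> Omega_prod q k n" "jumps q k x = 0" for x
    using that zero[OF that(2)] by (auto simp: Omega_prod_iff fun_eq_iff extensional_def)
  show ?thesis
  proof (cases "n = (\<lambda>_. 0)")
    case True
    then have "(\<lambda>i\<in>{1..q}. \<lambda>j\<in>{1..k i}. 0) \<in> Omega_prod q k n"
      by (simp add: Omega_prod_iff)
    moreover have "jumps q k (\<lambda>i\<in>{1..q}. \<lambda>j\<in>{1..k i}. 0) = 0"
      by (simp add: jumps_def)
    ultimately have "{x \<in> Omega_prod q k n. jumps q k x = 0} = {\<lambda>i\<in>{1..q}. \<lambda>j\<in>{1..k i}. 0}"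
      using x0 by blast
    with True show ?thesis by simp
  next
    case False
    with n0 show ?thesis by auto
  qed
qed

lemma prod_neg_rate_div_power:
  "(\<Prod>i\<in>{1..q}. \<Prod>j\<in>{1..k i}. (- lam i j / L) ^ x i j / fact (x i j))
     = (- 1 / L) ^ jumps q k x * rate_weight q k lam x"
proof -
  have "(- lam i j / L) ^ x i j / fact (x i j) = (- 1 / L) ^ x i j * (lam i j ^ x i j / fact (x i j))" for i j
  proof -
    have "- lam i j / L = (- 1 / L) * lam i j" by simp
    then show ?thesis by (simp only: power_mult_distrib) simp
  qed
  then have "(\<Prod>i\<in>{1..q}. \<Prod>j\<in>{1..k i}. (- lam i j / L) ^ x i j / fact (x i j))
      = (\<Prod>i\<in>{1..q}. \<Prod>j\<in>{1..k i}. (- 1 / L) ^ x i j) * rate_weight q k lam x"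
    by (simp only: rate_weight_def prod.distrib)
  then show ?thesis
    by (simp add: jumps_def power_sum)
qed

lemma poisson0_nonpos: "r \<le> 0 \<Longrightarrow> poisson0 r = return_pmf 0"
  by (simp add: poisson0_def)

lemma pmf_poisson0: "0 \<le> r \<Longrightarrow> pmf (poisson0 r) b = r ^ b / fact b * exp (- r)"
  by (cases "r = 0") (auto simp: poisson0_def indicator_def power_0_left)

lemma pmf_GCP_pmf:
  "pmf (GCP_pmf K l s) m = (\<Sum>x\<in>Omega K m. \<Prod>j\<in>{1..K}. pmf (poisson0 (l j * s)) (x j))"
proof -
  define P where "P = Pi_pmf {1..K} (0::nat) (\<lambda>j. poisson0 (l j * s))"
  define extend where "extend x j = (if j \<in> {1..K} then x j else 0)" for x :: "nat \<Rightarrow> nat" and j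
  define A where "A = {N. (\<forall>j. j \<notin> {1..K} \<longrightarrow> N j = 0) \<and> (\<Sum>j\<in>{1..K}. j * N j) = m}"
  have A_eq: "A = extend ` Omega K m"
  proof
    show "A \<subseteq> extend ` Omega K m"
    proof
      fix N assume N: "N \<in> A"
      then have "N = extend (restrict N {1..K})" "restrict N {1..K} \<in> Omega K m"
        by (auto simp: A_def extend_def fun_eq_iff Omega_def)
      then show "N \<in> extend ` Omega K m" by blast
    qed
  qed (auto simp: A_def extend_def Omega_def)
  have "inj_on extend (Omega K m)"
  proof (rule inj_onI)
    fix x y assume "x \<in> Omega K m" "y \<in> Omega K m" and eq: "extend x = extend y"
    have "x j = y j" if "j \<in> {1..K}" for j
      using fun_cong[OF eq, of j] that by (simp add: extend_def)
    with \<open>x \<in> Omega K m\<close> \<open>y \<in> Omega K m\<close> show "x = y"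
      by (intro extensionalityI[of _ "{1..K}"]) (auto simp: Omega_def PiE_def)
  qed
  have "set_pmf P \<subseteq> {N. \<forall>j. j \<notin> {1..K} \<longrightarrow> N j = 0}"
    unfolding P_def by (rule set_Pi_pmf_subset) simp
  then have "pmf (GCP_pmf K l s) m = measure P A"
    unfolding GCP_pmf_def P_def[symmetric] pmf_map
    by (intro measure_eq_AE AE_pmfI) (auto simp: A_def)
  also have "\<dots> = (\<Sum>N\<in>A. pmf P N)"
    unfolding A_eq using finite_Omega by (intro measure_measure_pmf_finite) simp
  also have "\<dots> = (\<Sum>x\<in>Omega K m. \<Prod>j\<in>{1..K}. pmf (poisson0 (l j * s)) (x j))"
    unfolding A_eq P_def using \<open>inj_on extend (Omega K m)\<close>
    by (simp add: sum.reindex pmf_Pi extend_def)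
  finally show ?thesis .
qed

abbreviation total_rate :: "nat \<Rightarrow> (nat \<Rightarrow> nat) \<Rightarrow> (nat \<Rightarrow> nat \<Rightarrow> real) \<Rightarrow> real" where
  "total_rate q k lam \<equiv> \<Sum>i\<in>{1..q}. \<Sum>j\<in>{1..k i}. lam i j"

lemma pmf_MGCP_pmf:
  assumes n: "n \<in> NQ q" and s: "0 \<le> s"
    and lam: "\<And>i j. i \<in> {1..q} \<Longrightarrow> j \<in> {1..k i} \<Longrightarrow> 0 \<le> lam i j"
  shows "pmf (MGCP_pmf q k lam s) n
       = (\<Sum>x\<in>Omega_prod q k n. rate_weight q k lam x * (s ^ jumps q k x * exp (- total_rate q k lam * s)))"
proof -
  have "pmf (MGCP_pmf q k lam s) n = (\<Prod>i\<in>{1..q}. pmf (GCP_pmf (k i) (lam i) s) (n i))"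
    unfolding MGCP_pmf_def using n by (simp add: pmf_Pi NQ_def)
  also have "\<dots> = (\<Sum>x\<in>Omega_prod q k n. \<Prod>i\<in>{1..q}. \<Prod>j\<in>{1..k i}. pmf (poisson0 (lam i j * s)) (x i j))"
    unfolding pmf_GCP_pmf Omega_prod_def by (rule prod_sum_PiE) (auto intro: finite_Omega)
  also have "\<dots> = (\<Sum>x\<in>Omega_prod q k n. rate_weight q k lam x * (s ^ jumps q k x * exp (- total_rate q k lam * s)))"
  proof (rule sum.cong[OF refl])
    fix x
    have "(\<Prod>i\<in>{1..q}. \<Prod>j\<in>{1..k i}. pmf (poisson0 (lam i j * s)) (x i j))
        = (\<Prod>i\<in>{1..q}. \<Prod>j\<in>{1..k i}. lam i j ^ x i j / fact (x i j) * (s ^ x i j * exp (- (lam i j * s))))"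
      using lam s by (intro prod.cong refl) (simp add: pmf_poisson0 power_mult_distrib)
    also have "\<dots> = rate_weight q k lam x * ((\<Prod>i\<in>{1..q}. \<Prod>j\<in>{1..k i}. s ^ x i j)
                       * (\<Prod>i\<in>{1..q}. \<Prod>j\<in>{1..k i}. exp (- (lam i j * s))))"
      by (simp only: rate_weight_def prod.distrib)
    also have "\<dots> = rate_weight q k lam x * (s ^ jumps q k x * exp (- total_rate q k lam * s))"
      by (simp add: jumps_def power_sum exp_sum sum_distrib_right sum_negf[symmetric])
    finally show "(\<Prod>i\<in>{1..q}. \<Prod>j\<in>{1..k i}. pmf (poisson0 (lam i j * s)) (x i j))
        = rate_weight q k lam x * (s ^ jumps q k x * exp (- total_rate q k lam * s))" .
  qed
  finally show ?thesis .
qed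

(* MGSFCP_prob integrates over all real times, and at negative times the Poisson laws
   degenerate exactly as at time 0. *)
lemma MGCP_pmf_nonpos:
  assumes "s \<le> 0" and lam: "\<And>i j. i \<in> {1..q} \<Longrightarrow> j \<in> {1..k i} \<Longrightarrow> 0 \<le> lam i j"
  shows "MGCP_pmf q k lam s = MGCP_pmf q k lam 0"
proof -
  have "poisson0 (lam i j * s) = poisson0 (lam i j * 0)" if "i \<in> {1..q}" "j \<in> {1..k i}" for i j
    using lam[OF that] assms(1) by (simp add: poisson0_nonpos mult_nonneg_nonpos)
  then show ?thesis
    unfolding MGCP_pmf_def GCP_pmf_def by (intro Pi_pmf_cong refl arg_cong[where f = "map_pmf _"]) auto
qed

section \<open>State probabilities of the MGSFCP\<close>

lemma fractional_weight_eq: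
  fixes L a :: real
  assumes "0 < L" "-1 < a"
  shows "L powr a * Gamma (a + 1) * rGamma (a - (\<Sum>i\<in>{1..q}. \<Sum>j\<in>{1..k i}. real (x i j)) + 1)
           * (\<Prod>i\<in>{1..q}. \<Prod>j\<in>{1..k i}. (- lam i j / L) ^ x i j / fact (x i j))
         = ffact a (jumps q k x) * (-1) ^ jumps q k x * L powr (a - jumps q k x) * rate_weight q k lam x"
proof -
  have jumps_eq: "(\<Sum>i\<in>{1..q}. \<Sum>j\<in>{1..k i}. real (x i j)) = real (jumps q k x)"
    by (simp add: jumps_def)
  have powr_eq: "L powr a * (- 1 / L) ^ m = (-1) ^ m * L powr (a - m)" for m :: nat
  proof -
    have "(- 1 / L) ^ m = (-1) ^ m / L ^ m" by (rule power_divide)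
    moreover have "L powr (a - m) = L powr a / L ^ m" using assms(1) by (simp add: powr_diff powr_realpow)
    ultimately show ?thesis by simp
  qed
  have "L powr a * Gamma (a + 1) * rGamma (a - (\<Sum>i\<in>{1..q}. \<Sum>j\<in>{1..k i}. real (x i j)) + 1)
           * (\<Prod>i\<in>{1..q}. \<Prod>j\<in>{1..k i}. (- lam i j / L) ^ x i j / fact (x i j))
      = (Gamma (a + 1) * rGamma (a - real (jumps q k x) + 1)) * (L powr a * (- 1 / L) ^ jumps q k x)
          * rate_weight q k lam x"
    by (simp only: jumps_eq prod_neg_rate_div_power mult_ac)
  also have "\<dots> = ffact a (jumps q k x) * ((-1) ^ jumps q k x * L powr (a - jumps q k x)) * rate_weight q k lam x"
    by (simp only: Gamma_mult_rGamma_eq_ffact[OF assms(2)] powr_eq)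
  finally show ?thesis
    by (simp only: mult_ac)
qed

locale MGSFCP =
  fixes q :: nat and k :: "nat \<Rightarrow> nat" and lam :: "nat \<Rightarrow> nat \<Rightarrow> real"
    and \<alpha> :: real and mu :: "real \<Rightarrow> real measure"
  assumes lam_nonneg: "\<And>i j. i \<in> {1..q} \<Longrightarrow> j \<in> {1..k i} \<Longrightarrow> 0 \<le> lam i j"
    and total_rate_pos: "0 < total_rate q k lam"
    and alpha_pos: "0 < \<alpha>"
    and mu_prob: "\<And>t. 0 \<le> t \<Longrightarrow> prob_space (mu t)"
    and mu_sets: "\<And>t. 0 \<le> t \<Longrightarrow> sets (mu t) = sets borel"
    and mu_nonneg: "\<And>t. 0 \<le> t \<Longrightarrow> AE x in mu t. 0 \<le> x"
    and mu_laplace: "\<And>t s. 0 \<le> t \<Longrightarrow> 0 < s \<Longrightarrow> (\<integral>x. exp (- s * x) \<partial>mu t) = exp (- t * s powr \<alpha>)"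
begin

lemma MGSFCP_prob_eq_sum:
  assumes t: "0 \<le> t" and n: "n \<in> NQ q"
  shows "MGSFCP_prob q k lam mu n t
       = (\<Sum>x\<in>Omega_prod q k n. rate_weight q k lam x * stable_moment \<alpha> t (jumps q k x) (total_rate q k lam))"
proof -
  interpret nonneg_borel_measure "mu t"
    using mu_prob[OF t] mu_sets[OF t] mu_nonneg[OF t]
    by (simp add: nonneg_borel_measure_def nonneg_borel_measure_axioms_def prob_space_def)
  define L where "L = total_rate q k lam"
  define g where "g s = (\<Sum>x\<in>Omega_prod q k n. rate_weight q k lam x * (s ^ jumps q k x * exp (- L * s)))" for s
  have "pmf (MGCP_pmf q k lam s) n = g (max s 0)" for s
    using MGCP_pmf_nonpos[OF _ lam_nonneg, of s] pmf_MGCP_pmf[OF n _ lam_nonneg, of "max s 0"]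
    by (cases "0 \<le> s") (simp_all add: g_def L_def)
  then have "MGSFCP_prob q k lam mu n t = (\<integral>s. g (max s 0) \<partial>mu t)"
    by (simp add: MGSFCP_prob_def)
  also have "\<dots> = (\<integral>s. g s \<partial>mu t)"
    using AE_nonneg by (intro integral_cong_AE) (auto intro!: measurable_from_borel simp: g_def)
  also have "\<dots> = (\<Sum>x\<in>Omega_prod q k n. rate_weight q k lam x * (\<integral>s. s ^ jumps q k x * exp (- L * s) \<partial>mu t))"
  proof -
    have "integrable (mu t) (\<lambda>s. rate_weight q k lam x * (s ^ jumps q k x * exp (- L * s)))" for x
      using total_rate_pos by (intro integrable_mult_right integrable_pow_mult_exp) (simp add: L_def)
    then show ?thesis
      unfolding g_def by (subst Bochner_Integration.integral_sum) auto
  qed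
  also have "\<dots> = (\<Sum>x\<in>Omega_prod q k n. rate_weight q k lam x * stable_moment \<alpha> t (jumps q k x) L)"
    using laplace_moment_eq_stable_moment[OF mu_laplace[OF t] total_rate_pos]
    by (simp add: L_def)
  finally show ?thesis unfolding L_def .
qed

lemma MGSFCP_prob_time_0:
  assumes n: "n \<in> NQ q"
  shows "MGSFCP_prob q k lam mu n 0 = (if n = (\<lambda>_. 0) then 1 else 0)"
proof -
  have "MGSFCP_prob q k lam mu n 0 = (\<Sum>x\<in>Omega_prod q k n. rate_weight q k lam x * (if jumps q k x = 0 then 1 else 0))"
    using total_rate_pos by (simp add: MGSFCP_prob_eq_sum[OF _ n] stable_moment_time_0)
  also have "\<dots> = (\<Sum>x\<in>{x \<in> Omega_prod q k n. jumps q k x = 0}. rate_weight q k lam x)"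
    by (auto simp: sum.inter_filter finite_Omega_prod intro!: sum.cong)
  also have "\<dots> = (if n = (\<lambda>_. 0) then 1 else 0)"
    by (simp add: Omega_prod_jumps_eq_0[OF n] rate_weight_def)
  finally show ?thesis .
qed

lemma has_real_derivative_MGSFCP_prob:
  assumes t: "0 < t" and n: "n \<in> NQ q"
  shows "((\<lambda>t. MGSFCP_prob q k lam mu n t) has_real_derivative
           - (\<Sum>m\<in>NQ_le q n. \<Sum>y\<in>Omega_prod q k m.
                ffact \<alpha> (jumps q k y) * (-1) ^ jumps q k y * total_rate q k lam powr (\<alpha> - jumps q k y)
                * rate_weight q k lam y * MGSFCP_prob q k lam mu (\<lambda>i. n i - m i) t)) (at t)"
proof -
  define L where "L = total_rate q k lam"
  define c where "c b = ffact \<alpha> b * (-1) ^ b * L powr (\<alpha> - b)" for b :: nat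
  define E where "E r = stable_moment \<alpha> t r L" for r
  define D where "D = (\<Sum>x\<in>Omega_prod q k n. rate_weight q k lam x *
      - (\<Sum>b\<le>jumps q k x. of_nat (jumps q k x choose b) * ffact \<alpha> b * (-1) ^ b * L powr (\<alpha> - of_nat b)
           * stable_moment \<alpha> t (jumps q k x - b) L))"
  have "((\<lambda>t. \<Sum>x\<in>Omega_prod q k n. rate_weight q k lam x * stable_moment \<alpha> t (jumps q k x) L)
          has_real_derivative D) (at t)"
    unfolding D_def using total_rate_pos
    by (intro DERIV_sum DERIV_cmult has_real_derivative_stable_moment_t) (simp add: L_def)
  then have deriv: "((\<lambda>t. MGSFCP_prob q k lam mu n t) has_real_derivative D) (at t)"
    by (rule has_field_derivative_transform_within_open[where S = "{0<..}"])
       (use t n in \<open>auto simp: MGSFCP_prob_eq_sum L_def\<close>)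
  have "D = - (\<Sum>x\<in>Omega_prod q k n. rate_weight q k lam x *
              (\<Sum>b\<le>jumps q k x. of_nat (jumps q k x choose b) * c b * E (jumps q k x - b)))"
    by (simp add: D_def c_def E_def sum_negf mult_ac)
  also have "\<dots> = - (\<Sum>m\<in>NQ_le q n. \<Sum>y\<in>Omega_prod q k m. c (jumps q k y) * rate_weight q k lam y *
              (\<Sum>z\<in>Omega_prod q k (\<lambda>i. n i - m i). rate_weight q k lam z * E (jumps q k z)))"
    by (simp only: rate_weight_binomial_convolution)
  also have "\<dots> = - (\<Sum>m\<in>NQ_le q n. \<Sum>y\<in>Omega_prod q k m. c (jumps q k y) * rate_weight q k lam y *
              MGSFCP_prob q k lam mu (\<lambda>i. n i - m i) t)"
  proof -
    have "(\<lambda>i. n i - m i) \<in> NQ q" for m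
      using n by (simp add: NQ_def)
    then show ?thesis
      using t by (simp add: MGSFCP_prob_eq_sum E_def L_def)
  qed
  finally show ?thesis
    using deriv by (simp add: c_def L_def)
qed

lemma infsum_fractional_rhs_eq:
  assumes t: "0 \<le> t" and n: "n \<in> NQ q"
  shows "(\<Sum>\<^sub>\<infinity>m\<in>NQ q. \<Sum>x\<in>PiE {1..q} (\<lambda>i. Omega (k i) (m i)).
            total_rate q k lam powr \<alpha> * Gamma (\<alpha> + 1) * MGSFCP_prob_diff q k lam mu n m t
            * rGamma (\<alpha> - (\<Sum>i\<in>{1..q}. \<Sum>j\<in>{1..k i}. real (x i j)) + 1)
            * (\<Prod>i\<in>{1..q}. \<Prod>j\<in>{1..k i}. (- lam i j / total_rate q k lam) ^ (x i j) / fact (x i j)))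
       = (\<Sum>m\<in>NQ_le q n. \<Sum>y\<in>Omega_prod q k m.
            ffact \<alpha> (jumps q k y) * (-1) ^ jumps q k y * total_rate q k lam powr (\<alpha> - jumps q k y)
            * rate_weight q k lam y * MGSFCP_prob q k lam mu (\<lambda>i. n i - m i) t)"
    (is "infsum ?F (NQ q) = _")
proof -
  have "?F m = 0" if "m \<in> NQ q - NQ_le q n" for m
  proof -
    from that have "\<exists>i\<in>{1..q}. n i < m i"
      by (auto simp: NQ_le_def not_le)
    then obtain i where "i \<in> {1..q}" "n i < m i" ..
    then show ?thesis by (auto simp: MGSFCP_prob_diff_def)
  qed
  then have "infsum ?F (NQ q) = infsum ?F (NQ_le q n)"
    by (intro infsum_cong_neutral) (auto simp: NQ_le_def)
  also have "\<dots> = sum ?F (NQ_le q n)"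
    by (simp add: finite_NQ_le)
  also have "\<dots> = (\<Sum>m\<in>NQ_le q n. \<Sum>y\<in>Omega_prod q k m.
            ffact \<alpha> (jumps q k y) * (-1) ^ jumps q k y * total_rate q k lam powr (\<alpha> - jumps q k y)
            * rate_weight q k lam y * MGSFCP_prob q k lam mu (\<lambda>i. n i - m i) t)"
  proof (rule sum.cong[OF refl])
    fix m assume "m \<in> NQ_le q n"
    then have "MGSFCP_prob_diff q k lam mu n m t = MGSFCP_prob q k lam mu (\<lambda>i. n i - m i) t"
      by (auto simp: MGSFCP_prob_diff_def NQ_le_def not_less)
    then show "?F m = (\<Sum>y\<in>Omega_prod q k m.
            ffact \<alpha> (jumps q k y) * (-1) ^ jumps q k y * total_rate q k lam powr (\<alpha> - jumps q k y)
            * rate_weight q k lam y * MGSFCP_prob q k lam mu (\<lambda>i. n i - m i) t)"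
      unfolding Omega_prod_def
      using fractional_weight_eq[OF total_rate_pos, of \<alpha>] alpha_pos
      by (intro sum.cong refl) (simp add: mult_ac)
  qed
  finally show ?thesis .
qed

end

theorem mainTheorem2:
  fixes q :: nat and k :: "nat \<Rightarrow> nat" and lam :: "nat \<Rightarrow> nat \<Rightarrow> real"
    and \<alpha> :: real and mu :: "real \<Rightarrow> real measure" and n :: "nat \<Rightarrow> nat"
  assumes q: "q \<ge> 1"
    and k: "\<And>i. i \<in> {1..q} \<Longrightarrow> k i \<ge> 1"
    and lam_pos: "\<And>i j. i \<in> {1..q} \<Longrightarrow> j \<in> {1..k i} \<Longrightarrow> lam i j > 0"
    and alpha: "0 < \<alpha>" "\<alpha> < 1"
    and mu_prob: "\<And>t. t \<ge> 0 \<Longrightarrow> prob_space (mu t)"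
    and mu_sets: "\<And>t. t \<ge> 0 \<Longrightarrow> sets (mu t) = sets borel"
    and mu_nonneg: "\<And>t. t \<ge> 0 \<Longrightarrow> AE x in mu t. 0 \<le> x"
    and mu_laplace: "\<And>t s. t \<ge> 0 \<Longrightarrow> s \<ge> 0 \<Longrightarrow>
                       (\<integral>x. exp (- s * x) \<partial>(mu t)) = exp (- t * s powr \<alpha>)"
    and n: "n \<in> NQ q"
  shows "(\<forall>t>0. ((\<lambda>t. MGSFCP_prob q k lam mu n t) has_real_derivative
            (- (\<Sum>\<^sub>\<infinity>m\<in>NQ q. \<Sum>x\<in>PiE {1..q} (\<lambda>i. Omega (k i) (m i)).
                  (\<Sum>i\<in>{1..q}. \<Sum>j\<in>{1..k i}. lam i j) powr \<alpha> * Gamma (\<alpha> + 1)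
                  * MGSFCP_prob_diff q k lam mu n m t
                  * rGamma (\<alpha> - (\<Sum>i\<in>{1..q}. \<Sum>j\<in>{1..k i}. real (x i j)) + 1)
                  * (\<Prod>i\<in>{1..q}. \<Prod>j\<in>{1..k i}.
                       (- lam i j / (\<Sum>i\<in>{1..q}. \<Sum>j\<in>{1..k i}. lam i j)) ^ (x i j) / fact (x i j)))))
          (at t))
         \<and> MGSFCP_prob q k lam mu n 0 = (if n = (\<lambda>_. 0) then 1 else 0)"
proof -
  interpret MGSFCP q k lam \<alpha> mu
  proof (rule MGSFCP.intro)
    show "0 \<le> lam i j" if "i \<in> {1..q}" "j \<in> {1..k i}" for i j
      using lam_pos[OF that] by simp
    show "0 < total_rate q k lam"
      using q k lam_pos by (intro sum_pos) auto
    show "(\<integral>x. exp (- s * x) \<partial>mu t) = exp (- t * s powr \<alpha>)" if "0 \<le> t" "0 < s" for t s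
      using mu_laplace that by simp
  qed (simp_all add: alpha mu_prob mu_sets mu_nonneg)
  show ?thesis
    using has_real_derivative_MGSFCP_prob[OF _ n] infsum_fractional_rhs_eq[OF _ n] MGSFCP_prob_time_0[OF n]
    by auto
qed

end
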